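(* Let $n \ge 3$ be an integer and let $I$ be a degree-based topological index with coefficients $c_{12},c_{13},c_{22},c_{23},c_{33}$. Define $c'_{12} = c_{12}-4c_{22}+3c_{23}$, $c'_{13} = c_{13}-3c_{22}+2c_{23}$, $c'_{33} = c_{22}-2c_{23}+c_{33}$. If $\max\{0,-c'_{33}\}<\min\{c'_{12},c'_{13}\}$, then the cycle $C_n$ on $n$ vertices is, up to isomorphism, the only graph in $\mathcal{G}_3(n,n)$ that minimizes $I$.
   Context: For integers $n,m$, $\mathcal{G}_3(n,m)$ denotes the set of simple connected undirected graphs (chemical graphs) with $n$ vertices, $m$ edges and maximum degree at most $3$; in particular $\mathcal{G}_3(n,n)$ is the set of connected unicyclic graphs of order $n$ with maximum degree at most $3$. For a graph $G$ and $1\le i\le j$, an $ij$-edge is an edge whose endpoints have degrees $i$ and $j$, and $m_{ij}$ denotes the number of $ij$-edges of $G$. A degree-based topological index $I$ is a function on chemical graphs of order $n\ge 3$ of the form $I(G)=c_{12}m_{12}+c_{13}m_{13}+c_{22}m_{22}+c_{23}m_{23}+c_{33}m_{33}$, where the $c_{ij}$ are fixed real numbers. *)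

theory Defs
  imports Complex_Main
begin

text \<open>Graphs on the vertex set {0..<n}, given by their edge set (a set of 2-element sets).\<close>

definition simple_graph :: "nat \<Rightarrow> nat set set \<Rightarrow> bool" where
  "simple_graph n E \<longleftrightarrow> (\<forall>e\<in>E. \<exists>u v. u \<noteq> v \<and> u < n \<and> v < n \<and> e = {u, v})"

definition vdeg :: "nat set set \<Rightarrow> nat \<Rightarrow> nat" where
  "vdeg E v = card {e\<in>E. v \<in> e}"

definition adj_rel :: "nat set set \<Rightarrow> (nat \<times> nat) set" where
  "adj_rel E = {(u, v). {u, v} \<in> E}"

definition graph_connected :: "nat \<Rightarrow> nat set set \<Rightarrow> bool" where
  "graph_connected n E \<longleftrightarrow> (\<forall>u<n. \<forall>v<n. (u, v) \<in> (adj_rel E)\<^sup>*)"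

definition G3 :: "nat \<Rightarrow> nat \<Rightarrow> nat set set set" where
  "G3 n m = {E. simple_graph n E \<and> graph_connected n E \<and> card E = m \<and> (\<forall>v<n. vdeg E v \<le> 3)}"

definition medges :: "nat set set \<Rightarrow> nat \<Rightarrow> nat \<Rightarrow> nat" where
  "medges E i j = card {e\<in>E. \<exists>u v. u \<noteq> v \<and> e = {u, v} \<and> vdeg E u = i \<and> vdeg E v = j}"

definition deg_index :: "real \<Rightarrow> real \<Rightarrow> real \<Rightarrow> real \<Rightarrow> real \<Rightarrow> nat set set \<Rightarrow> real" where
  "deg_index c12 c13 c22 c23 c33 E =
     c12 * medges E 1 2 + c13 * medges E 1 3 + c22 * medges E 2 2 + c23 * medges E 2 3 + c33 * medges E 3 3"

definition cycle_graph :: "nat \<Rightarrow> nat set set" where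
  "cycle_graph n = {{i, (i + 1) mod n} | i. i < n}"

definition graph_iso :: "nat \<Rightarrow> nat set set \<Rightarrow> nat set set \<Rightarrow> bool" where
  "graph_iso n E F \<longleftrightarrow> (\<exists>f. bij_betw f {0..<n} {0..<n} \<and>
      (\<forall>u<n. \<forall>v<n. {u, v} \<in> E \<longleftrightarrow> {f u, f v} \<in> F))"

end

theory Submission
  imports Defs
begin

text \<open>For a unicyclic chemical graph let \<open>n\<^sub>i\<close> be the number of vertices of degree \<open>i\<close> and
  \<open>m\<^sub>i\<^sub>j\<close> the number of \<open>ij\<close>-edges. Counting vertex-edge incidences class by class gives
  \<open>n\<^sub>1 = m\<^sub>1\<^sub>2 + m\<^sub>1\<^sub>3\<close> (two adjacent leaves would be a whole component),
  \<open>2 n\<^sub>2 = m\<^sub>1\<^sub>2 + 2 m\<^sub>2\<^sub>2 + m\<^sub>2\<^sub>3\<close> and \<open>3 n\<^sub>3 = m\<^sub>1\<^sub>3 + m\<^sub>2\<^sub>3 + 2 m\<^sub>3\<^sub>3\<close>, while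
  the handshake lemma with \<open>m = n\<close> gives \<open>n\<^sub>1 = n\<^sub>3\<close>. Eliminating \<open>m\<^sub>2\<^sub>2\<close> and \<open>m\<^sub>2\<^sub>3\<close> turns the
  index into \<open>c\<^sub>2\<^sub>2 n + c'\<^sub>1\<^sub>2 m\<^sub>1\<^sub>2 + c'\<^sub>1\<^sub>3 m\<^sub>1\<^sub>3 + c'\<^sub>3\<^sub>3 m\<^sub>3\<^sub>3\<close>. Contracting all
  vertices of degree 3 to one vertex leaves a connected graph, whence \<open>m\<^sub>3\<^sub>3 \<le> n\<^sub>3 = n\<^sub>1\<close>, and so
  the index is at least \<open>c\<^sub>2\<^sub>2 n + (min c'\<^sub>1\<^sub>2 c'\<^sub>1\<^sub>3 - max 0 (-c'\<^sub>3\<^sub>3)) n\<^sub>1\<close>, whereas the cycle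
  has index \<open>c\<^sub>2\<^sub>2 n\<close>. Under the hypothesis equality forces \<open>n\<^sub>1 = 0\<close>: the graph is 2-regular, and a
  walk that never turns back closes up after visiting every vertex exactly once.\<close>

lemma simple_graph_finite: "simple_graph n E \<Longrightarrow> finite E"
  by (rule finite_subset[of _ "Pow {..<n}"]) (auto simp: simple_graph_def)

lemma simple_graph_edgeE:
  assumes "simple_graph n E" "e \<in> E"
  obtains u v where "u \<noteq> v" "u < n" "v < n" "e = {u, v}"
  using assms unfolding simple_graph_def by blast

lemma sym_adj_rel: "sym (adj_rel E)"
  by (auto simp: sym_def adj_rel_def insert_commute)

lemma graph_connectedI:
  assumes "\<And>v. v < n \<Longrightarrow> (0, v) \<in> (adj_rel E)\<^sup>*"
  shows "graph_connected n E"
  unfolding graph_connected_def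
proof (intro allI impI)
  fix u v assume "u < n" "v < n"
  then have "(u, 0) \<in> (adj_rel E)\<^sup>*" "(0, v) \<in> (adj_rel E)\<^sup>*"
    using assms sym_rtrancl[OF sym_adj_rel] by (auto intro: symD)
  then show "(u, v) \<in> (adj_rel E)\<^sup>*" by (rule rtrancl_trans)
qed

lemma sum_vdeg_weighted:
  fixes f :: "nat \<Rightarrow> 'a::comm_semiring_1"
  assumes "simple_graph n E"
  shows "(\<Sum>v<n. of_nat (vdeg E v) * f v) = (\<Sum>e\<in>E. \<Sum>v\<in>e. f v)"
proof -
  have "(\<Sum>v<n. of_nat (vdeg E v) * f v) = (\<Sum>v<n. \<Sum>e\<in>{e\<in>E. v \<in> e}. f v)"
    by (simp add: vdeg_def)
  also have "\<dots> = (\<Sum>e\<in>E. \<Sum>v\<in>{v\<in>{..<n}. v \<in> e}. f v)"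
    using simple_graph_finite[OF assms] by (intro sum.swap_restrict) auto
  also have "\<dots> = (\<Sum>e\<in>E. \<Sum>v\<in>e. f v)"
  proof (rule sum.cong)
    fix e assume "e \<in> E"
    then have "e \<subseteq> {..<n}" using assms by (auto elim: simple_graph_edgeE)
    then have "{v\<in>{..<n}. v \<in> e} = e" by blast
    then show "(\<Sum>v\<in>{v\<in>{..<n}. v \<in> e}. f v) = (\<Sum>v\<in>e. f v)" by simp
  qed simp
  finally show ?thesis .
qed

lemma handshake: "simple_graph n E \<Longrightarrow> (\<Sum>v<n. vdeg E v) = 2 * card E"
proof -
  assume simple: "simple_graph n E"
  have "card e = 2" if "e \<in> E" for e
    using simple that by (auto elim: simple_graph_edgeE)
  then show ?thesis
    using sum_vdeg_weighted[OF simple, of "\<lambda>_. 1::nat"] by simp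
qed

lemma rtrancl_step_closer:
  assumes "(v, r) \<in> R\<^sup>*" "v \<noteq> r"
  shows "\<exists>y. (v, y) \<in> R \<and> (LEAST k. (y, r) \<in> R ^^ k) < (LEAST k. (v, r) \<in> R ^^ k)"
proof -
  define d where "d x = (LEAST k. (x, r) \<in> R ^^ k)" for x
  have v: "(v, r) \<in> R ^^ d v"
    unfolding d_def using rtrancl_imp_relpow[OF assms(1)] by (rule LeastI_ex)
  have "d v \<noteq> 0"
  proof
    assume "d v = 0"
    with v assms(2) show False by simp
  qed
  then obtain k where k: "d v = Suc k"
    using not0_implies_Suc by blast
  with v obtain y where y: "(v, y) \<in> R" "(y, r) \<in> R ^^ k"
    using relpow_Suc_D2 by metis
  have "d y \<le> k" unfolding d_def using y(2) by (rule Least_le)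
  with y(1) k show ?thesis unfolding d_def[symmetric] by auto
qed

text \<open>Every vertex other than the root \<open>r\<close> is injectively assigned the first edge of a
  shortest path to \<open>r\<close>.\<close>

lemma card_connected_vertices_le:
  fixes F :: "nat set set"
  assumes "finite V" "r \<in> V" "finite F" "\<forall>e\<in>F. card e = 2"
    and reach: "\<forall>v\<in>V. (v, r) \<in> (adj_rel F)\<^sup>*"
  shows "card V \<le> card F + 1"
proof -
  define dist where "dist v = (LEAST k. (v, r) \<in> adj_rel F ^^ k)" for v
  have "\<forall>v\<in>V - {r}. \<exists>y. (v, y) \<in> adj_rel F \<and> dist y < dist v"
    unfolding dist_def using reach rtrancl_step_closer by (metis DiffE singletonI)
  then obtain p where p: "\<And>v. v \<in> V - {r} \<Longrightarrow> {v, p v} \<in> F \<and> dist (p v) < dist v"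
    unfolding adj_rel_def by (metis (no_types, lifting) case_prod_conv mem_Collect_eq)
  have "inj_on (\<lambda>v. {v, p v}) (V - {r})"
  proof (rule inj_onI)
    fix v w assume v: "v \<in> V - {r}" and w: "w \<in> V - {r}" and eq: "{v, p v} = {w, p w}"
    show "v = w"
    proof (rule ccontr)
      assume "v \<noteq> w"
      with eq have "p v = w" "p w = v" by (auto simp: doubleton_eq_iff)
      with p[OF v] p[OF w] show False by simp
    qed
  qed
  moreover have "(\<lambda>v. {v, p v}) ` (V - {r}) \<subseteq> F" using p by blast
  ultimately have "card (V - {r}) \<le> card F"
    using \<open>finite F\<close> by (metis card_inj_on_le)
  then show ?thesis using assms(1,2) by (simp add: card_Diff_singleton)
qed

definition ij_edge :: "nat set set \<Rightarrow> nat \<Rightarrow> nat \<Rightarrow> nat set \<Rightarrow> bool" where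
  "ij_edge E i j e \<longleftrightarrow> (\<exists>u v. u \<noteq> v \<and> e = {u, v} \<and> vdeg E u = i \<and> vdeg E v = j)"

definition degree_class :: "nat \<Rightarrow> nat set set \<Rightarrow> nat \<Rightarrow> nat set" where
  "degree_class n E d = {v. v < n \<and> vdeg E v = d}"

lemma medges_eq_card_ij_edge: "medges E i j = card {e \<in> E. ij_edge E i j e}"
  by (simp add: medges_def ij_edge_def)

lemma ij_edge_doubleton_iff:
  assumes "u \<noteq> v"
  shows "ij_edge E i j {u, v} \<longleftrightarrow> (vdeg E u = i \<and> vdeg E v = j) \<or> (vdeg E u = j \<and> vdeg E v = i)"
    (is "_ \<longleftrightarrow> ?degrees")
proof
  show "ij_edge E i j {u, v} \<Longrightarrow> ?degrees"
    unfolding ij_edge_def by (auto simp: doubleton_eq_iff)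
  show "?degrees \<Longrightarrow> ij_edge E i j {u, v}"
    unfolding ij_edge_def using assms by (metis insert_commute)
qed

lemma ij_edge_commute: "ij_edge E i j e \<longleftrightarrow> ij_edge E j i e"
  unfolding ij_edge_def by (metis insert_commute)

lemma medges_commute: "medges E i j = medges E j i"
  unfolding medges_eq_card_ij_edge by (simp add: ij_edge_commute)

lemma degree_pair_count:
  fixes a b :: nat
  assumes "a \<in> {1, 2, 3}" "b \<in> {1, 2, 3}"
  shows "(if a = i then 1 else 0) + (if b = i then 1 else 0) =
    (\<Sum>j\<in>{1, 2, 3}. (if j = i then 2 else 1) * (if (a = i \<and> b = j) \<or> (a = j \<and> b = i) then 1 else 0 :: nat))"
  using assms by auto

locale connected_graph =
  fixes n :: nat and E :: "nat set set"
  assumes simple: "simple_graph n E" and connected: "graph_connected n E"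
begin

lemma finite_edges: "finite E"
  using simple by (rule simple_graph_finite)

lemma edge_vertices:
  assumes "{u, v} \<in> E" shows "u \<noteq> v \<and> u < n \<and> v < n"
proof -
  obtain a b where "a \<noteq> b" "a < n" "b < n" "{u, v} = {a, b}"
    using simple assms by (rule simple_graph_edgeE)
  then show ?thesis by (auto simp: doubleton_eq_iff)
qed

lemma closed_set_covers_vertices:
  assumes "a \<in> A" "a < n" "\<And>x y. x \<in> A \<Longrightarrow> {x, y} \<in> E \<Longrightarrow> y \<in> A"
  shows "{..<n} \<subseteq> A"
proof
  fix v assume "v \<in> {..<n}"
  with \<open>a < n\<close> have "(a, v) \<in> (adj_rel E)\<^sup>*"
    using connected by (simp add: graph_connected_def)
  then show "v \<in> A"
  proof (induction rule: rtrancl_induct)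
    case (step y z)
    then show ?case using assms(3) by (simp add: adj_rel_def)
  qed (rule assms(1))
qed

lemma vdeg_pos: assumes "2 \<le> n" "v < n" shows "0 < vdeg E v"
proof (rule ccontr)
  assume "\<not> 0 < vdeg E v"
  then have "{e \<in> E. v \<in> e} = {}"
    using finite_edges by (simp add: vdeg_def)
  then have "{..<n} \<subseteq> {v}"
    using assms(2) by (intro closed_set_covers_vertices) auto
  then have "n \<le> 1"
    using card_mono[of "{v}" "{..<n}"] by simp
  with assms(1) show False by simp
qed

lemma unique_edge_if_vdeg_1:
  assumes "vdeg E v = 1" "e \<in> E" "v \<in> e" "e' \<in> E" "v \<in> e'"
  shows "e' = e"
proof -
  obtain a where a: "{f \<in> E. v \<in> f} = {a}"
    using assms(1) unfolding vdeg_def by (rule card_1_singletonE)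
  have "e \<in> {a}" "e' \<in> {a}"
    using assms(2-5) unfolding a[symmetric] by simp_all
  then show ?thesis by simp
qed

lemma no_edge_between_leaves:
  assumes "3 \<le> n" "{u, v} \<in> E"
  shows "vdeg E u \<noteq> 1 \<or> vdeg E v \<noteq> 1"
proof (rule ccontr)
  assume "\<not> ?thesis"
  then have leaves: "vdeg E u = 1" "vdeg E v = 1" by auto
  have "{..<n} \<subseteq> {u, v}"
  proof (rule closed_set_covers_vertices[of u])
    fix x y assume x: "x \<in> {u, v}" and xy: "{x, y} \<in> E"
    have "vdeg E x = 1" using x leaves by auto
    then have "{x, y} = {u, v}"
      using unique_edge_if_vdeg_1[OF _ assms(2) _ xy] x by simp
    then show "y \<in> {u, v}" by auto
  qed (use edge_vertices[OF assms(2)] in simp_all)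
  then have "n \<le> card {u, v}"
    using card_mono[of "{u, v}" "{..<n}"] by simp
  also have "\<dots> \<le> 2" by (cases "u = v") simp_all
  finally show False using assms(1) by simp
qed

text \<open>Contracting \<open>W\<close> to a single vertex \<open>w\<close> leaves a connected graph on \<open>n - card W + 1\<close>
  vertices whose edges are the images of the edges not inside \<open>W\<close>.\<close>

lemma card_edges_within_le:
  assumes W: "W \<subseteq> {..<n}" "w \<in> W"
  shows "card {e \<in> E. e \<subseteq> W} + n \<le> card E + card W"
proof -
  define \<phi> where "\<phi> v = (if v \<in> W then w else v)" for v
  define outer where "outer = {e \<in> E. \<not> e \<subseteq> W}"
  define F where "F = image \<phi> ` outer"
  have finite_W: "finite W" using W(1) finite_subset by blast
  have "E = {e \<in> E. e \<subseteq> W} \<union> outer" "{e \<in> E. e \<subseteq> W} \<inter> outer = {}"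
    unfolding outer_def by auto
  then have "card E = card {e \<in> E. e \<subseteq> W} + card outer"
    using finite_edges card_Un_disjoint[of "{e \<in> E. e \<subseteq> W}" outer]
    by (simp add: outer_def)
  moreover have "card F \<le> card outer"
    unfolding F_def outer_def using finite_edges by (intro card_image_le) simp
  moreover have "card (\<phi> ` {..<n}) \<le> card F + 1"
  proof (rule card_connected_vertices_le)
    show "w \<in> \<phi> ` {..<n}" using W by (force simp: \<phi>_def)
    show "finite F" unfolding F_def outer_def using finite_edges by simp
    show "\<forall>e\<in>F. card e = 2"
    proof
      fix e' assume "e' \<in> F"
      then obtain u v where "{u, v} \<in> E" "\<not> {u, v} \<subseteq> W" "e' = {\<phi> u, \<phi> v}"
        unfolding F_def outer_def using simple by (auto elim!: simple_graph_edgeE)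
      moreover have "\<phi> u \<noteq> \<phi> v"
        using calculation edge_vertices W(2) by (auto simp: \<phi>_def)
      ultimately show "card e' = 2" by simp
    qed
    have contracted_path: "(\<phi> a, \<phi> b) \<in> (adj_rel F)\<^sup>*" if "(a, b) \<in> (adj_rel E)\<^sup>*" for a b
      using that
    proof (induction rule: rtrancl_induct)
      case (step y z)
      show ?case
      proof (cases "{y, z} \<subseteq> W")
        case True
        then show ?thesis using step.IH by (simp add: \<phi>_def)
      next
        case False
        with step.hyps(2) have "{y, z} \<in> outer"
          by (simp add: outer_def adj_rel_def)
        then have "\<phi> ` {y, z} \<in> F" unfolding F_def by (rule imageI)
        then show ?thesis
          using step.IH by (auto simp: adj_rel_def intro: rtrancl_into_rtrancl)
      qed
    qed simp
    show "\<forall>v\<in>\<phi> ` {..<n}. (v, w) \<in> (adj_rel F)\<^sup>*"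
    proof
      fix v assume "v \<in> \<phi> ` {..<n}"
      then obtain a where "a < n" "v = \<phi> a" by auto
      moreover have "w < n" "\<phi> w = w" using W by (auto simp: \<phi>_def)
      ultimately show "(v, w) \<in> (adj_rel F)\<^sup>*"
        using connected contracted_path unfolding graph_connected_def by metis
    qed
  qed simp
  moreover have "\<phi> ` {..<n} = ({..<n} - W) \<union> {w}"
    using W by (auto simp: \<phi>_def)
  then have "card (\<phi> ` {..<n}) = n - card W + 1"
    using W finite_W by (simp add: card_Diff_subset)
  moreover have "card W \<le> n"
    using card_mono[OF finite_lessThan W(1)] by simp
  ultimately show ?thesis by linarith
qed

lemma medges_1_1:
  assumes "3 \<le> n" shows "medges E 1 1 = 0"
proof -
  have "{e \<in> E. ij_edge E 1 1 e} = {}"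
    using no_edge_between_leaves[OF assms] unfolding ij_edge_def by blast
  then show ?thesis by (simp only: medges_eq_card_ij_edge card.empty)
qed

end

section \<open>The cycle\<close>

lemma Suc_mod_eq_if: "i < n \<Longrightarrow> Suc i mod n = (if Suc i = n then 0 else Suc i)"
  by auto

lemma cycle_graph_eq: "cycle_graph n = (\<lambda>i. {i, Suc i mod n}) ` {..<n}"
  unfolding cycle_graph_def by auto

lemma inj_on_cycle_edge:
  assumes "3 \<le> n" shows "inj_on (\<lambda>i. {i, Suc i mod n}) {..<n}"
proof (rule inj_onI)
  fix i j assume i: "i \<in> {..<n}" and j: "j \<in> {..<n}" and eq: "{i, Suc i mod n} = {j, Suc j mod n}"
  show "i = j"
  proof (rule ccontr)
    assume "i \<noteq> j"
    with eq have "i = Suc j mod n" "j = Suc i mod n" by (auto simp: doubleton_eq_iff)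
    then have "i = (if Suc j = n then 0 else Suc j)" "j = (if Suc i = n then 0 else Suc i)"
      using i j by (simp_all only: lessThan_iff Suc_mod_eq_if)
    with assms show False by presburger
  qed
qed

lemma card_cycle_graph: "3 \<le> n \<Longrightarrow> card (cycle_graph n) = n"
  by (simp add: cycle_graph_eq card_image inj_on_cycle_edge)

lemma simple_graph_cycle_graph:
  assumes "2 \<le> n" shows "simple_graph n (cycle_graph n)"
  unfolding simple_graph_def cycle_graph_eq
proof
  fix e assume "e \<in> (\<lambda>i. {i, Suc i mod n}) ` {..<n}"
  then obtain i where "i < n" "e = {i, Suc i mod n}" by auto
  moreover have "i \<noteq> Suc i mod n" "Suc i mod n < n"
    using calculation assms by (auto simp: Suc_mod_eq_if)
  ultimately show "\<exists>u v. u \<noteq> v \<and> u < n \<and> v < n \<and> e = {u, v}" by blast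
qed

lemma vdeg_cycle_graph:
  assumes "3 \<le> n" "v < n" shows "vdeg (cycle_graph n) v = 2"
proof -
  define pred where "pred = (if v = 0 then n - 1 else v - 1)"
  have pred: "pred < n" "Suc pred mod n = v" "pred \<noteq> v"
    using assms unfolding pred_def by auto
  have "i = pred" if "i < n" "Suc i mod n = v" for i
    using that(2) assms unfolding Suc_mod_eq_if[OF that(1)] pred_def by (auto split: if_splits)
  then have "{i \<in> {..<n}. v \<in> {i, Suc i mod n}} = {v, pred}"
    using pred assms(2) by blast
  moreover have "{e \<in> cycle_graph n. v \<in> e} = (\<lambda>i. {i, Suc i mod n}) ` {i \<in> {..<n}. v \<in> {i, Suc i mod n}}"
    unfolding cycle_graph_eq by auto
  moreover have "inj_on (\<lambda>i. {i, Suc i mod n}) {v, pred}"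
    using inj_on_cycle_edge[OF assms(1)] by (rule inj_on_subset) (use pred assms in auto)
  ultimately show ?thesis
    unfolding vdeg_def using pred(3) by (simp add: card_image)
qed

lemma graph_connected_cycle_graph: "graph_connected n (cycle_graph n)"
proof (rule graph_connectedI)
  fix v assume "v < n"
  then show "(0, v) \<in> (adj_rel (cycle_graph n))\<^sup>*"
  proof (induction v)
    case (Suc v)
    then have "{v, Suc v} \<in> cycle_graph n"
      unfolding cycle_graph_eq by (intro image_eqI[of _ _ v]) simp_all
    with Suc show ?case
      by (auto simp: adj_rel_def intro: rtrancl_into_rtrancl)
  qed simp
qed

lemma cycle_graph_G3: "3 \<le> n \<Longrightarrow> cycle_graph n \<in> G3 n n"
  by (simp add: G3_def simple_graph_cycle_graph graph_connected_cycle_graph card_cycle_graph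
      vdeg_cycle_graph)

text \<open>A Hamiltonian cycle in a graph with \<open>n\<close> edges exhausts the edge set.\<close>

lemma graph_iso_cycle_graphI:
  assumes "3 \<le> n" "card E = n" and x: "bij_betw x {..<n} {..<n}"
    and cycle: "\<And>i. i < n \<Longrightarrow> {x i, x (Suc i mod n)} \<in> E"
  shows "graph_iso n E (cycle_graph n)"
proof -
  let ?C = "cycle_graph n"
  have inj: "inj_on (image x) (Pow {..<n})"
    using x by (simp add: bij_betw_def inj_on_image_Pow)
  have C_Pow: "?C \<subseteq> Pow {..<n}"
    unfolding cycle_graph_eq by auto
  have image_C: "image x ` ?C \<subseteq> E"
    unfolding cycle_graph_eq using cycle by auto
  moreover have "card (image x ` ?C) = card E"
    using card_image[OF inj_on_subset[OF inj C_Pow]] card_cycle_graph assms(1,2) by simp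
  moreover have "finite E" using assms(1,2) by (intro card_ge_0_finite) simp
  ultimately have E_eq: "E = image x ` ?C" by (intro card_subset_eq[symmetric])
  have edge_iff: "{x i, x j} \<in> E \<longleftrightarrow> {i, j} \<in> ?C" if "i < n" "j < n" for i j
  proof
    assume "{x i, x j} \<in> E"
    then obtain e where "e \<in> ?C" "x ` e = x ` {i, j}"
      unfolding E_eq by auto
    moreover have "e = {i, j}"
      using inj_onD[OF inj calculation(2)] C_Pow calculation(1) that by auto
    ultimately show "{i, j} \<in> ?C" by simp
  qed (use image_C in auto)
  define f where "f = inv_into {..<n} x"
  have f: "bij_betw f {..<n} {..<n}"
    unfolding f_def using x by (rule bij_betw_inv_into)
  have "f u < n" "x (f u) = u" if "u < n" for u
    using that x f unfolding f_def by (auto simp: bij_betw_def f_inv_into_f inv_into_into)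
  then show ?thesis
    unfolding graph_iso_def using f edge_iff by (metis atLeast0LessThan)
qed

section \<open>Connected 2-regular graphs are cycles\<close>

locale connected_two_regular = connected_graph +
  assumes pos: "0 < n" and vdeg_2: "\<forall>v<n. vdeg E v = 2"
begin

lemma neighbour_cases:
  assumes "{a, b} \<in> E" "{a, c} \<in> E" "b \<noteq> c" "{a, d} \<in> E"
  shows "d = b \<or> d = c"
proof (rule ccontr)
  assume "\<not> ?thesis"
  then have "card {{a, b}, {a, c}, {a, d}} = 3"
    using assms(3) edge_vertices[OF assms(1)] edge_vertices[OF assms(2)] edge_vertices[OF assms(4)]
    by (auto simp: card_insert_if doubleton_eq_iff)
  moreover have "card {{a, b}, {a, c}, {a, d}} \<le> vdeg E a"
    unfolding vdeg_def using assms finite_edges by (intro card_mono) auto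
  moreover have "vdeg E a = 2" using vdeg_2 edge_vertices[OF assms(1)] by simp
  ultimately show False by simp
qed

lemma other_neighbour_exists:
  assumes "a < n" shows "\<exists>b. {a, b} \<in> E \<and> b \<noteq> p"
proof -
  have "card {e \<in> E. a \<in> e} = 2" using vdeg_2 assms by (simp add: vdeg_def)
  then obtain e1 e2 where e: "{e \<in> E. a \<in> e} = {e1, e2}" "e1 \<noteq> e2"
    by (meson card_2_iff)
  have ex: "\<exists>b. e = {a, b}" if e: "e \<in> {e \<in> E. a \<in> e}" for e
  proof -
    have "e \<in> E" using e by simp
    with simple obtain u v where "e = {u, v}"
      by (rule simple_graph_edgeE)
    moreover have "a = u \<or> a = v" using e calculation by simp
    ultimately show ?thesis by (metis insert_commute)
  qed
  obtain b1 b2 where "e1 = {a, b1}" "e2 = {a, b2}"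
    using ex[of e1] ex[of e2] unfolding e(1) by auto
  moreover have "e1 \<in> E" "e2 \<in> E" using e(1) by auto
  ultimately show ?thesis using e(2) by auto
qed

definition other_neighbour :: "nat \<Rightarrow> nat \<Rightarrow> nat" where
  "other_neighbour p a = (SOME b. {a, b} \<in> E \<and> b \<noteq> p)"

lemma other_neighbour: "a < n \<Longrightarrow> {a, other_neighbour p a} \<in> E \<and> other_neighbour p a \<noteq> p"
  unfolding other_neighbour_def by (rule someI_ex) (rule other_neighbour_exists)

text \<open>The first step may go to either neighbour of \<open>0\<close>; afterwards the walk never turns back.\<close>

fun walk :: "nat \<Rightarrow> nat" where
  "walk 0 = 0"
| "walk (Suc 0) = other_neighbour 0 0"
| "walk (Suc (Suc k)) = other_neighbour (walk k) (walk (Suc k))"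

lemma walk_edge: "{walk k, walk (Suc k)} \<in> E"
proof (induction k)
  case 0
  then show ?case using other_neighbour[OF pos] by simp
next
  case (Suc k)
  then show ?case using other_neighbour edge_vertices by simp
qed

lemma walk_less: "walk k < n"
  using edge_vertices[OF walk_edge] by simp

lemma walk_Suc_neq: "walk (Suc k) \<noteq> walk k"
  using edge_vertices[OF walk_edge[of k]] by simp

lemma walk_Suc_Suc_neq: "walk (Suc (Suc k)) \<noteq> walk k"
  using other_neighbour[OF walk_less] by simp

declare walk.simps(2,3) [simp del]

lemma walk_neighbour_cases:
  assumes "{walk (Suc k), b} \<in> E" shows "b = walk k \<or> b = walk (Suc (Suc k))"
  using neighbour_cases[OF _ walk_edge walk_Suc_Suc_neq[symmetric] assms] walk_edge[of k]
  by (simp add: insert_commute)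

definition period :: nat where
  "period = (LEAST k. \<exists>j<k. walk j = walk k)"

lemma walk_repeats: "\<exists>k. \<exists>j<k. walk j = walk k"
proof (rule ccontr)
  assume no_repeat: "\<not> ?thesis"
  have "inj_on walk {..n}"
    by (rule inj_onI) (use no_repeat in \<open>metis linorder_neqE_nat\<close>)
  moreover have "walk ` {..n} \<subseteq> {..<n}" using walk_less by auto
  ultimately have "card {..n} \<le> card {..<n}" by (intro card_inj_on_le) auto
  then show False by simp
qed

lemma walk_period_repeats: "\<exists>j<period. walk j = walk period"
  unfolding period_def using walk_repeats by (rule LeastI_ex)

lemma inj_on_walk_period: "inj_on walk {..<period}"
proof (rule inj_onI)
  have no_repeat: "\<not> (\<exists>j<k. walk j = walk k)" if "k < period" for k
    using that unfolding period_def by (rule not_less_Least)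
  fix i j assume "i \<in> {..<period}" "j \<in> {..<period}" "walk i = walk j"
  then show "i = j"
    using no_repeat[of i] no_repeat[of j] by (metis lessThan_iff linorder_neqE_nat)
qed

lemma walk_period: "walk period = walk 0" and three_le_period: "3 \<le> period"
proof -
  obtain j where j: "j < period" "walk j = walk period"
    using walk_period_repeats by blast
  have "Suc j \<noteq> period" using j(2) walk_Suc_neq[of j] by auto
  with j(1) have j2: "Suc (Suc j) \<le> period" by simp
  have j0: "j = 0"
  proof (rule ccontr)
    assume "j \<noteq> 0"
    then obtain i where i: "j = Suc i" using not0_implies_Suc by blast
    obtain l where l: "period = Suc l" using j(1) not0_implies_Suc by fastforce
    have "{walk (Suc i), walk l} \<in> E"
      using walk_edge[of l] j(2) i l by (simp add: insert_commute)
    then have "walk l = walk i \<or> walk l = walk (Suc (Suc i))"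
      by (rule walk_neighbour_cases)
    moreover have "walk l \<noteq> walk i"
      using inj_onD[OF inj_on_walk_period, of l i] i l j(1) by auto
    ultimately have "walk l = walk (Suc (Suc i))" by simp
    then have "l = Suc (Suc i)"
      by (rule inj_onD[OF inj_on_walk_period]) (use i l j2 in simp_all)
    then show False
      using walk_Suc_Suc_neq[of "Suc i"] j(2) i l by simp
  qed
  then show "walk period = walk 0" using j(2) by simp
  moreover have "period \<noteq> 2" using walk_Suc_Suc_neq[of 0] calculation by (auto simp: numeral_2_eq_2)
  ultimately show "3 \<le> period" using j2 j0 by simp
qed

lemma walk_image_closed:
  assumes "i < period" "{walk i, b} \<in> E" shows "b \<in> walk ` {..<period}"
proof (cases i)
  case 0
  have "{walk 0, walk 1} \<in> E" using walk_edge[of 0] by simp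
  moreover have "{walk 0, walk (period - 1)} \<in> E"
    using walk_edge[of "period - 1"] walk_period three_le_period by (simp add: insert_commute)
  moreover have "walk 1 \<noteq> walk (period - 1)"
    using inj_on_walk_period three_le_period by (auto dest: inj_onD)
  ultimately have "b = walk 1 \<or> b = walk (period - 1)"
    using neighbour_cases assms(2) 0 by blast
  then show ?thesis using three_le_period by auto
next
  case (Suc k)
  then have "b = walk k \<or> b = walk (Suc i)"
    using walk_neighbour_cases assms(2) by simp
  moreover have "walk (Suc i) \<in> walk ` {..<period}"
    using assms(1) walk_period three_le_period
    by (cases "Suc i = period") (auto intro: image_eqI[of _ _ 0])
  ultimately show ?thesis using assms(1) Suc by auto
qed

lemma period_eq: "period = n" and walk_image: "walk ` {..<n} = {..<n}"
proof -
  have covers: "{..<n} \<subseteq> walk ` {..<period}"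
  proof (rule closed_set_covers_vertices)
    show "walk 0 \<in> walk ` {..<period}" by (rule imageI) (use three_le_period in simp)
    show "walk 0 < n" by (rule walk_less)
    fix x y assume "x \<in> walk ` {..<period}" "{x, y} \<in> E"
    then show "y \<in> walk ` {..<period}" using walk_image_closed by blast
  qed
  moreover have within: "walk ` {..<period} \<subseteq> {..<n}" using walk_less by auto
  moreover have "card (walk ` {..<period}) = period"
    using inj_on_walk_period by (simp add: card_image)
  ultimately show "period = n"
    by (metis card_lessThan card_mono finite_lessThan finite_imageI le_antisym)
  with covers within show "walk ` {..<n} = {..<n}" by auto
qed

lemma card_edges: "card E = n"
  using handshake[OF simple] vdeg_2 by simp

theorem graph_iso_cycle_graph: "graph_iso n E (cycle_graph n)"
proof (rule graph_iso_cycle_graphI)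
  show "3 \<le> n" using three_le_period period_eq by simp
  show "bij_betw walk {..<n} {..<n}"
    using inj_on_walk_period walk_image period_eq by (simp add: bij_betw_def)
  fix i assume "i < n"
  then show "{walk i, walk (Suc i mod n)} \<in> E"
    using walk_edge[of i] walk_period period_eq by (cases "Suc i = n") simp_all
qed (rule card_edges)

end

locale chemical_graph = connected_graph +
  assumes two_le: "2 \<le> n" and max_vdeg: "\<forall>v<n. vdeg E v \<le> 3"
begin

lemma vdeg_cases: "v < n \<Longrightarrow> vdeg E v \<in> {1, 2, 3}"
  using vdeg_pos[OF two_le, of v] max_vdeg by auto

lemma sum_by_degree_class:
  fixes f :: "nat \<Rightarrow> 'a::comm_semiring_1"
  shows "(\<Sum>v<n. f (vdeg E v)) = (\<Sum>d\<in>{1, 2, 3}. of_nat (card (degree_class n E d)) * f d)"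
proof -
  have "(\<Sum>v<n. f (vdeg E v)) = (\<Sum>d\<in>{1, 2, 3}. of_nat (card {v \<in> {..<n}. vdeg E v = d}) * f d)"
    using vdeg_cases by (intro sum_fun_comp) auto
  then show ?thesis by (simp add: degree_class_def)
qed

lemma card_degree_classes: "card (degree_class n E 1) + card (degree_class n E 2) + card (degree_class n E 3) = n"
  using sum_by_degree_class[of "\<lambda>_. 1::nat"] by simp

lemma handshake_by_degree_class:
  "card (degree_class n E 1) + 2 * card (degree_class n E 2) + 3 * card (degree_class n E 3) = 2 * card E"
  using sum_by_degree_class[of "\<lambda>d. d"] handshake[OF simple] by simp

text \<open>Double counting the pairs (vertex of degree \<open>i\<close>, incident edge).\<close>

lemma degree_class_count:
  "i * card (degree_class n E i) = (\<Sum>j\<in>{1, 2, 3}. (if j = i then 2 else 1) * medges E i j)"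
proof -
  let ?c = "\<lambda>j. if j = i then 2 else 1 :: nat"
  have "i * card (degree_class n E i) = (\<Sum>v\<in>{v \<in> {..<n}. vdeg E v = i}. i)"
    by (simp add: degree_class_def)
  also have "\<dots> = (\<Sum>v<n. if vdeg E v = i then i else 0)"
    by (rule sum.inter_filter) simp
  also have "\<dots> = (\<Sum>v<n. vdeg E v * (if vdeg E v = i then 1 else 0))"
    by (rule sum.cong) simp_all
  also have "\<dots> = (\<Sum>e\<in>E. \<Sum>v\<in>e. if vdeg E v = i then 1 else 0)"
    using sum_vdeg_weighted[OF simple, of "\<lambda>v. if vdeg E v = i then 1 else 0::nat"] by simp
  also have "\<dots> = (\<Sum>e\<in>E. \<Sum>j\<in>{1, 2, 3}. ?c j * (if ij_edge E i j e then 1 else 0))"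
  proof (rule sum.cong)
    fix e assume "e \<in> E"
    with simple obtain u v where uv: "u \<noteq> v" "u < n" "v < n" "e = {u, v}"
      by (rule simple_graph_edgeE)
    then show "(\<Sum>v\<in>e. if vdeg E v = i then 1 else 0) =
        (\<Sum>j\<in>{1, 2, 3}. ?c j * (if ij_edge E i j e then 1 else 0))"
      using degree_pair_count[OF vdeg_cases vdeg_cases, of u v i] by (simp add: ij_edge_doubleton_iff)
  qed simp
  also have "\<dots> = (\<Sum>j\<in>{1, 2, 3}. ?c j * (\<Sum>e\<in>E. if ij_edge E i j e then 1 else 0))"
    by (simp only: sum_distrib_left sum.swap[of _ E])
  also have "\<dots> = (\<Sum>j\<in>{1, 2, 3}. ?c j * medges E i j)"
    unfolding medges_eq_card_ij_edge card_eq_sum sum.inter_filter[OF finite_edges] ..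
  finally show ?thesis .
qed

end

section \<open>The index of unicyclic chemical graphs\<close>

locale unicyclic_chemical_graph = chemical_graph +
  assumes three_le: "3 \<le> n" and card_edges: "card E = n"
begin

abbreviation "leaves \<equiv> card (degree_class n E 1)"

lemma leaves_eq: "leaves = medges E 1 2 + medges E 1 3"
  using degree_class_count[of 1] medges_1_1[OF three_le] by simp

lemma card_degree_class_3: "card (degree_class n E 3) = leaves"
  using card_degree_classes handshake_by_degree_class card_edges by linarith

lemma medges_3_3_le: "medges E 3 3 \<le> leaves"
proof -
  let ?W = "degree_class n E 3"
  have "{e \<in> E. ij_edge E 3 3 e} \<subseteq> {e \<in> E. e \<subseteq> ?W}"
    using edge_vertices by (auto simp: ij_edge_def degree_class_def)
  then have "medges E 3 3 \<le> card {e \<in> E. e \<subseteq> ?W}"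
    unfolding medges_eq_card_ij_edge using finite_edges by (intro card_mono) simp_all
  also have "\<dots> \<le> card ?W"
  proof (cases "?W = {}")
    case True
    then have "{e \<in> E. e \<subseteq> ?W} = {}" using simple by (auto simp: simple_graph_def)
    then show ?thesis by (simp only: card.empty le0)
  next
    case False
    then obtain w where "w \<in> ?W" by blast
    then show ?thesis
      using card_edges_within_le[of ?W w] card_edges by (auto simp: degree_class_def)
  qed
  finally show ?thesis using card_degree_class_3 by simp
qed

lemma deg_index_eq:
  "deg_index c12 c13 c22 c23 c33 E = c22 * n + (c12 - 4 * c22 + 3 * c23) * medges E 1 2
     + (c13 - 3 * c22 + 2 * c23) * medges E 1 3 + (c22 - 2 * c23 + c33) * medges E 3 3"
proof -
  have "2 * card (degree_class n E 2) = medges E 1 2 + 2 * medges E 2 2 + medges E 2 3"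
    using degree_class_count[of 2] medges_commute[of E 2 1] by simp
  moreover have "3 * leaves = medges E 1 3 + medges E 2 3 + 2 * medges E 3 3"
    using degree_class_count[of 3] card_degree_class_3 medges_commute[of E 3 1]
      medges_commute[of E 3 2] by simp
  ultimately have m22: "medges E 2 2 + 4 * medges E 1 2 + 3 * medges E 1 3 = n + medges E 3 3"
    and m23: "medges E 2 3 + 2 * medges E 3 3 = 3 * medges E 1 2 + 2 * medges E 1 3"
    using card_degree_classes card_degree_class_3 leaves_eq by linarith+
  then have "real (medges E 2 2) + 4 * real (medges E 1 2) + 3 * real (medges E 1 3)
      - real n - real (medges E 3 3) = 0"
    "real (medges E 2 3) + 2 * real (medges E 3 3) - 3 * real (medges E 1 2)
      - 2 * real (medges E 1 3) = 0"
    using arg_cong[OF m22, of real] arg_cong[OF m23, of real] by simp_all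
  moreover have "deg_index c12 c13 c22 c23 c33 E - (c22 * n + (c12 - 4 * c22 + 3 * c23) * medges E 1 2
     + (c13 - 3 * c22 + 2 * c23) * medges E 1 3 + (c22 - 2 * c23 + c33) * medges E 3 3) =
    c22 * (real (medges E 2 2) + 4 * real (medges E 1 2) + 3 * real (medges E 1 3)
      - real n - real (medges E 3 3)) +
    c23 * (real (medges E 2 3) + 2 * real (medges E 3 3) - 3 * real (medges E 1 2)
      - 2 * real (medges E 1 3))"
    unfolding deg_index_def by (simp add: algebra_simps)
  ultimately show ?thesis by simp
qed

lemma deg_index_lower_bound:
  fixes c12 c13 c22 c23 c33 :: real
  shows "c22 * n + (min (c12 - 4 * c22 + 3 * c23) (c13 - 3 * c22 + 2 * c23) - max 0 (- (c22 - 2 * c23 + c33)))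
     * leaves \<le> deg_index c12 c13 c22 c23 c33 E"
proof -
  define a b c :: real where "a = c12 - 4 * c22 + 3 * c23" and "b = c13 - 3 * c22 + 2 * c23"
    and "c = c22 - 2 * c23 + c33"
  have "min a b * leaves \<le> a * medges E 1 2 + b * medges E 1 3"
    unfolding leaves_eq of_nat_add distrib_left by (intro add_mono mult_right_mono) simp_all
  moreover have "- max 0 (- c) * leaves \<le> - max 0 (- c) * medges E 3 3"
    using medges_3_3_le by (intro mult_left_mono_neg) simp_all
  moreover have "- max 0 (- c) * medges E 3 3 \<le> c * medges E 3 3"
    by (intro mult_right_mono) simp_all
  ultimately show ?thesis
    unfolding deg_index_eq a_def[symmetric] b_def[symmetric] c_def[symmetric]
    by (simp add: algebra_simps)
qed

lemma deg_index_if_no_leaves: "leaves = 0 \<Longrightarrow> deg_index c12 c13 c22 c23 c33 E = c22 * n"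
  using leaves_eq medges_3_3_le by (simp add: deg_index_eq)

lemma vdeg_eq_2_if_no_leaves:
  assumes "leaves = 0" "v < n" shows "vdeg E v = 2"
proof -
  have "card (degree_class n E 1) = 0" "card (degree_class n E 3) = 0"
    using assms(1) card_degree_class_3 by simp_all
  then have "degree_class n E 1 = {}" "degree_class n E 3 = {}"
    by (simp_all add: degree_class_def)
  then show ?thesis
    using vdeg_cases[OF assms(2)] assms(2) by (auto simp: degree_class_def)
qed

lemma graph_iso_cycle_graph_if_no_leaves:
  assumes "leaves = 0" shows "graph_iso n E (cycle_graph n)"
proof -
  interpret connected_two_regular n E
    using three_le vdeg_eq_2_if_no_leaves[OF assms] by unfold_locales auto
  show ?thesis by (rule graph_iso_cycle_graph)
qed

context
  fixes c12 c13 c22 c23 c33 \<gamma> :: real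
  defines "\<gamma> \<equiv> min (c12 - 4 * c22 + 3 * c23) (c13 - 3 * c22 + 2 * c23) - max 0 (- (c22 - 2 * c23 + c33))"
  assumes gap: "max 0 (- (c22 - 2 * c23 + c33)) < min (c12 - 4 * c22 + 3 * c23) (c13 - 3 * c22 + 2 * c23)"
begin

lemma c22_mult_n_le_deg_index: "c22 * n \<le> deg_index c12 c13 c22 c23 c33 E"
proof -
  have "0 \<le> \<gamma> * leaves" using gap by (simp add: \<gamma>_def)
  then show ?thesis using deg_index_lower_bound[of c22 c12 c23 c13 c33] unfolding \<gamma>_def by linarith
qed

lemma no_leaves_if_deg_index_le:
  assumes "deg_index c12 c13 c22 c23 c33 E \<le> c22 * n" shows "leaves = 0"
proof -
  have "\<gamma> * leaves \<le> 0"
    using deg_index_lower_bound[of c22 c12 c23 c13 c33] assms unfolding \<gamma>_def by linarith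
  moreover have "0 < \<gamma>" using gap by (simp add: \<gamma>_def)
  ultimately show ?thesis by (simp add: mult_le_0_iff)
qed

end

end

lemma unicyclic_chemical_graphI:
  "E \<in> G3 n n \<Longrightarrow> 3 \<le> n \<Longrightarrow> unicyclic_chemical_graph n E"
  by unfold_locales (auto simp: G3_def)

lemma deg_index_cycle_graph:
  assumes "3 \<le> n" shows "deg_index c12 c13 c22 c23 c33 (cycle_graph n) = c22 * n"
proof -
  interpret unicyclic_chemical_graph n "cycle_graph n"
    using cycle_graph_G3[OF assms] assms by (rule unicyclic_chemical_graphI)
  have "leaves = 0" using vdeg_cycle_graph[OF assms] by (simp add: degree_class_def)
  then show ?thesis by (rule deg_index_if_no_leaves)
qed

theorem theorem2:
  fixes n :: nat and c12 c13 c22 c23 c33 :: real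
  assumes "n \<ge> 3"
    and "max 0 (- (c22 - 2 * c23 + c33)) <
         min (c12 - 4 * c22 + 3 * c23) (c13 - 3 * c22 + 2 * c23)"
  shows "cycle_graph n \<in> G3 n n \<and>
         (\<forall>E\<in>G3 n n. deg_index c12 c13 c22 c23 c33 (cycle_graph n) \<le> deg_index c12 c13 c22 c23 c33 E) \<and>
         (\<forall>E\<in>G3 n n. deg_index c12 c13 c22 c23 c33 E = deg_index c12 c13 c22 c23 c33 (cycle_graph n)
              \<longrightarrow> graph_iso n E (cycle_graph n))"
proof -
  let ?I = "deg_index c12 c13 c22 c23 c33"
  have "?I (cycle_graph n) \<le> ?I E" if "E \<in> G3 n n" for E
    using unicyclic_chemical_graph.c22_mult_n_le_deg_index[OF unicyclic_chemical_graphI[OF that assms(1)]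
        assms(2)] deg_index_cycle_graph[OF assms(1)] by simp
  moreover have "graph_iso n E (cycle_graph n)" if "E \<in> G3 n n" "?I E = ?I (cycle_graph n)" for E
  proof -
    interpret unicyclic_chemical_graph n E using that(1) assms(1) by (rule unicyclic_chemical_graphI)
    have "leaves = 0"
      using no_leaves_if_deg_index_le[OF assms(2)] that(2) deg_index_cycle_graph[OF assms(1)] by simp
    then show ?thesis by (rule graph_iso_cycle_graph_if_no_leaves)
  qed
  ultimately show ?thesis using cycle_graph_G3[OF assms(1)] by blast
qed

end
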